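(* Let $k>1$ be an integer and let $n$ be a pseudoprime of basis $k$. Let $\Pi_n$ denote the number of periodic points of prime period $n$ of the circle map $f(\theta)=k\theta \pmod{2\pi}$. Then $$\frac{k^{n}-k-\Pi_n}{n}\in\mathbb{N}.$$
   Context: A positive integer $n$ is called a pseudoprime of basis $k$ (where $k>1$ is an integer) if $n$ is an odd composite number, $\gcd(n,k)=1$, and $k^{n-1}\equiv 1 \pmod n$. The circle map with parameter $k$ is $f:S^1\to S^1$, $f(\theta)=k\theta \pmod{2\pi}$, where $\theta\in[0,2\pi)$ is the angular coordinate on the unit circle $S^1$. A point $\theta$ is a periodic point of prime (i.e. least) period $n$ if $f^{n}(\theta)=\theta$ and $f^{m}(\theta)\neq\theta$ for $0<m<n$; $\Pi_n$ is the number of such points. $\mathbb{N}$ denotes the positive integers. *)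

theory Defs
  imports "HOL-Analysis.Analysis" "HOL-Number_Theory.Number_Theory"
begin

definition pseudoprime :: "nat \<Rightarrow> nat \<Rightarrow> bool" where
  "pseudoprime k n \<longleftrightarrow> odd n \<and> n > 1 \<and> \<not> prime n \<and> coprime n k \<and> [k ^ (n - 1) = 1] (mod n)"

definition circle_map :: "nat \<Rightarrow> real \<Rightarrow> real" where
  "circle_map k \<theta> = real k * \<theta> - 2 * pi * of_int \<lfloor>real k * \<theta> / (2 * pi)\<rfloor>"

definition Pi_count :: "nat \<Rightarrow> nat \<Rightarrow> nat" where
  "Pi_count k n = card {\<theta> \<in> {0..<2 * pi}. (circle_map k ^^ n) \<theta> = \<theta> \<and>
      (\<forall>m. 0 < m \<and> m < n \<longrightarrow> (circle_map k ^^ m) \<theta> \<noteq> \<theta>)}"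

end

theory Submission
  imports Defs "HOL-Combinatorics.Orbits" "HOL-Library.Real_Mod"
begin

text \<open>
  Write \<open>f\<close> for the circle map.  The fixed points of \<open>f\<^sup>m\<close> are the \<open>k\<^sup>m - 1\<close> points
  \<open>2\<pi>j/(k\<^sup>m - 1)\<close>.  A point of least period \<open>n\<close> is fixed by \<open>f\<^sup>n\<close> but not by \<open>f\<^sup>d\<close>
  for a proper divisor \<open>1 < d < n\<close>, which exists because \<open>n\<close> is composite; hence
  \<open>\<Pi>\<^sub>n \<le> k\<^sup>n - k\<^sup>d < k\<^sup>n - k\<close>.  The points of least period \<open>n\<close> are partitioned into
  \<open>f\<close>-orbits of exactly \<open>n\<close> points, so \<open>n\<close> divides \<open>\<Pi>\<^sub>n\<close>, and \<open>n\<close> divides \<open>k\<^sup>n - k\<close>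
  by the pseudoprime congruence \<open>k\<^sup>n\<^sup>-\<^sup>1 \<equiv> 1\<close>.
\<close>

definition periodic_points :: "('a \<Rightarrow> 'a) \<Rightarrow> 'a set \<Rightarrow> nat \<Rightarrow> 'a set" where
  "periodic_points f A n = {x \<in> A. (f ^^ n) x = x}"

definition prime_period_points :: "('a \<Rightarrow> 'a) \<Rightarrow> 'a set \<Rightarrow> nat \<Rightarrow> 'a set" where
  "prime_period_points f A n =
     {x \<in> A. (f ^^ n) x = x \<and> (\<forall>m. 0 < m \<and> m < n \<longrightarrow> (f ^^ m) x \<noteq> x)}"

lemma funpow_in_invariant_set:
  assumes "\<forall>x\<in>A. f x \<in> A" "x \<in> A"
  shows "(f ^^ m) x \<in> A"
  by (induction m) (use assms in auto)

lemma prime_period_points_invariant: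
  assumes "\<forall>x\<in>A. f x \<in> A" "x \<in> prime_period_points f A n"
  shows "f x \<in> prime_period_points f A n"
proof (cases n)
  case 0
  with assms show ?thesis by (simp add: prime_period_points_def)
next
  case (Suc n')
  have x: "x \<in> A" "(f ^^ n) x = x" "\<And>m. 0 < m \<Longrightarrow> m < n \<Longrightarrow> (f ^^ m) x \<noteq> x"
    using assms(2) by (auto simp: prime_period_points_def)
  have "(f ^^ n) (f x) = f x"
    using x(2) by (metis funpow_swap1)
  moreover have "(f ^^ m) (f x) \<noteq> f x" if "0 < m" "m < n" for m
  proof
    assume "(f ^^ m) (f x) = f x"
    then have "(f ^^ m) ((f ^^ n') (f x)) = (f ^^ n') (f x)"
      by (metis funpow_add add.commute comp_apply)
    moreover have "(f ^^ n') (f x) = x"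
      using x(2) Suc by (simp add: funpow_swap1)
    ultimately have "(f ^^ m) x = x"
      by simp
    with x(3) that show False by blast
  qed
  ultimately show ?thesis
    using assms(1) x(1) by (simp add: prime_period_points_def)
qed

lemma inj_on_funpow_least_period:
  assumes "(f ^^ n) x = x" "\<And>m. 0 < m \<Longrightarrow> m < n \<Longrightarrow> (f ^^ m) x \<noteq> x"
  shows "inj_on (\<lambda>m. (f ^^ m) x) {..<n}"
proof -
  have False if "i < j" "j < n" "(f ^^ i) x = (f ^^ j) x" for i j
  proof -
    have "(f ^^ (n - j + i)) x = (f ^^ (n - j)) ((f ^^ j) x)"
      using that(3) by (simp add: funpow_add)
    also have "\<dots> = x"
      using that(2) assms(1) by (metis funpow_add comp_apply le_add_diff_inverse2 less_imp_le)
    finally show False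
      using assms(2)[of "n - j + i"] that(1,2) by linarith
  qed
  then show ?thesis
    unfolding inj_on_def by (metis lessThan_iff linorder_neqE_nat)
qed

lemma card_orbit_least_period:
  assumes "0 < n" "(f ^^ n) x = x" "\<And>m. 0 < m \<Longrightarrow> m < n \<Longrightarrow> (f ^^ m) x \<noteq> x"
  shows "card (orbit f x) = n"
proof -
  have "orbit f x = (\<lambda>m. (f ^^ m) x) ` {..<n}"
    using orbit_altdef_bounded[OF assms(2,1)] by auto
  then show ?thesis
    using inj_on_funpow_least_period[OF assms(2,3)] by (simp add: card_image)
qed

lemma dvd_card_prime_period_points:
  assumes "finite (prime_period_points f A n)" "\<forall>x\<in>A. f x \<in> A" "0 < n"
  shows "n dvd card (prime_period_points f A n)"
proof -
  define P where "P = prime_period_points f A n"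
  define r where "r = {(x, y). x \<in> P \<and> y \<in> orbit f x}"
  have P_invariant: "\<forall>x\<in>P. f x \<in> P"
    using prime_period_points_invariant[OF assms(2)] by (simp add: P_def)
  have self_in_orbit: "x \<in> orbit f x" if "x \<in> P" for x
    using that assms(3) by (auto simp: P_def prime_period_points_def orbit_altdef intro!: exI[of _ n])
  have "r \<subseteq> P \<times> P"
    using funpow_in_invariant_set[OF P_invariant] by (auto simp: r_def orbit_altdef)
  then have "equiv P r"
    unfolding r_def by (auto intro!: equivI refl_onI symI transI self_in_orbit
        intro: orbit_swap orbit_trans)
  moreover have "n dvd card X" if "X \<in> P // r" for X
  proof -
    obtain x where "x \<in> P" "X = orbit f x"
      using \<open>X \<in> P // r\<close> by (auto simp: quotient_def r_def)
    then have "card X = n"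
      by (auto simp: P_def prime_period_points_def intro!: card_orbit_least_period[OF assms(3)])
    then show ?thesis
      by simp
  qed
  moreover have "finite P"
    using assms(1) by (simp add: P_def)
  ultimately show ?thesis
    unfolding P_def[symmetric] by (rule equiv_imp_dvd_card[rotated])
qed

lemma periodic_points_subset_of_dvd:
  assumes "d dvd n"
  shows "periodic_points f A d \<subseteq> periodic_points f A n"
proof
  fix x assume "x \<in> periodic_points f A d"
  then have "(f ^^ n) x = (f ^^ (n mod d)) x" "x \<in> A" "(f ^^ d) x = x"
    by (simp_all add: periodic_points_def funpow_mod_eq)
  with assms show "x \<in> periodic_points f A n"
    by (simp add: periodic_points_def)
qed

lemma card_prime_period_points_le:
  assumes "finite (periodic_points f A n)" "d dvd n" "0 < d" "d < n"
  shows "card (prime_period_points f A n)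
           \<le> card (periodic_points f A n) - card (periodic_points f A d)"
proof -
  have "prime_period_points f A n \<subseteq> periodic_points f A n - periodic_points f A d"
    using assms(3,4) by (auto simp: prime_period_points_def periodic_points_def)
  then have "card (prime_period_points f A n) \<le> card (periodic_points f A n - periodic_points f A d)"
    using assms(1) by (intro card_mono) auto
  also have "\<dots> = card (periodic_points f A n) - card (periodic_points f A d)"
    using assms(1) periodic_points_subset_of_dvd[OF assms(2), of f A]
    by (intro card_Diff_subset) (auto intro: finite_subset)
  finally show ?thesis .
qed

lemma circle_map_eq_rmod: "circle_map k \<theta> = (real k * \<theta>) rmod (2 * pi)"
  by (simp add: circle_map_def rmod_def)

lemma rmod_of_nat_mult_rmod: "(of_nat c * (x rmod m)) rmod m = (of_nat c * x) rmod m"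
proof -
  define q where "q = int c * \<lfloor>x / \<bar>m\<bar>\<rfloor> * (if m < 0 then -1 else 1)"
  have "of_nat c * x = of_nat c * (x rmod m) + of_int q * m"
    by (simp add: rmod_def q_def algebra_simps)
  then have "[of_nat c * (x rmod m) = of_nat c * x] (rmod m)"
    unfolding rcong_altdef by blast
  then show ?thesis
    by (simp add: rcong_def)
qed

lemma funpow_circle_map:
  assumes "\<theta> \<in> {0..<2 * pi}"
  shows "(circle_map k ^^ m) \<theta> = (real k ^ m * \<theta>) rmod (2 * pi)"
proof (induction m)
  case 0
  then show ?case using assms by simp
next
  case (Suc m)
  then show ?case
    using rmod_of_nat_mult_rmod[of k] by (simp add: circle_map_eq_rmod mult.assoc)
qed

lemma fixed_points_times_rmod:
  assumes "1 < N"
  shows "{\<theta> \<in> {0..<2 * pi}. (real N * \<theta>) rmod (2 * pi) = \<theta>}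
           = (\<lambda>j. 2 * pi * (real j / (real N - 1))) ` {..<N - 1}"
proof (intro equalityI subsetI)
  fix \<theta> assume "\<theta> \<in> {\<theta> \<in> {0..<2 * pi}. (real N * \<theta>) rmod (2 * pi) = \<theta>}"
  then have \<theta>: "0 \<le> \<theta>" "\<theta> < 2 * pi" and fixed: "(real N * \<theta>) rmod (2 * pi) = \<theta>"
    by auto
  define j where "j = \<lfloor>real N * \<theta> / (2 * pi)\<rfloor>"
  have j: "(real N - 1) * \<theta> = 2 * pi * of_int j"
    using fixed by (simp add: rmod_def j_def algebra_simps)
  have "0 \<le> 2 * pi * of_int j" "2 * pi * of_int j < 2 * pi * (real N - 1)"
    using j \<theta> assms by (simp_all flip: j)
  then have "0 \<le> j" "real_of_int j < real N - 1"
    using pi_gt_zero by (auto simp: zero_le_mult_iff)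
  then have "0 \<le> j" "j < int N - 1"
    by linarith+
  show "\<theta> \<in> (\<lambda>j. 2 * pi * (real j / (real N - 1))) ` {..<N - 1}"
  proof
    show "\<theta> = 2 * pi * (real (nat j) / (real N - 1))"
      using j \<open>0 \<le> j\<close> assms by (simp add: field_simps)
    have "nat j < N - 1"
      using \<open>0 \<le> j\<close> \<open>j < int N - 1\<close> by presburger
    then show "nat j \<in> {..<N - 1}"
      by simp
  qed
next
  fix \<theta> assume "\<theta> \<in> (\<lambda>j. 2 * pi * (real j / (real N - 1))) ` {..<N - 1}"
  then obtain j where j: "j < N - 1" and \<theta>: "\<theta> = 2 * pi * (real j / (real N - 1))"
    by auto
  have "real j / (real N - 1) < 1"
    using j by simp
  then have "2 * pi * (real j / (real N - 1)) < 2 * pi * 1"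
    by (intro mult_strict_left_mono) auto
  then have range: "\<theta> \<in> {0..<2 * pi}"
    using assms by (simp add: \<theta>)
  have "real N * \<theta> = \<theta> + of_int (int j) * (2 * pi)"
    using assms by (simp add: \<theta> field_simps)
  then have "(real N * \<theta>) rmod (2 * pi) = \<theta>"
    using range by (intro rmod_unique[where n = "int j"]) auto
  with range show "\<theta> \<in> {\<theta> \<in> {0..<2 * pi}. (real N * \<theta>) rmod (2 * pi) = \<theta>}"
    by simp
qed

lemma circle_map_in_circle: "circle_map k \<theta> \<in> {0..<2 * pi}"
  by (simp add: circle_map_eq_rmod rmod_nonneg rmod_less)

lemma card_periodic_points_circle_map:
  assumes "1 < k" "0 < m"
  shows "finite (periodic_points (circle_map k) {0..<2 * pi} m)"
    and "card (periodic_points (circle_map k) {0..<2 * pi} m) = k ^ m - 1"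
proof -
  have "1 < k ^ m"
    using assms by (rule one_less_power)
  have "periodic_points (circle_map k) {0..<2 * pi} m
          = {\<theta> \<in> {0..<2 * pi}. (real (k ^ m) * \<theta>) rmod (2 * pi) = \<theta>}"
    by (auto simp: periodic_points_def funpow_circle_map)
  also have "\<dots> = (\<lambda>j. 2 * pi * (real j / (real (k ^ m) - 1))) ` {..<k ^ m - 1}"
    using \<open>1 < k ^ m\<close> by (rule fixed_points_times_rmod)
  finally have eq: "periodic_points (circle_map k) {0..<2 * pi} m = \<dots>" .
  have "1 < real (k ^ m)"
    using \<open>1 < k ^ m\<close> by linarith
  then have "inj_on (\<lambda>j. 2 * pi * (real j / (real (k ^ m) - 1))) {..<k ^ m - 1}"
    by (auto simp: inj_on_def)
  then show "card (periodic_points (circle_map k) {0..<2 * pi} m) = k ^ m - 1"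
    by (simp add: eq card_image)
  show "finite (periodic_points (circle_map k) {0..<2 * pi} m)"
    by (simp add: eq)
qed

lemma card_prime_period_points_circle_map_less:
  assumes "1 < k" "d dvd n" "1 < d" "d < n"
  shows "card (prime_period_points (circle_map k) {0..<2 * pi} n) < k ^ n - k"
proof -
  let ?Fix = "periodic_points (circle_map k) {0..<2 * pi}"
  have "card (prime_period_points (circle_map k) {0..<2 * pi} n) \<le> card (?Fix n) - card (?Fix d)"
    using assms by (intro card_prime_period_points_le card_periodic_points_circle_map(1)) auto
  also have "\<dots> = k ^ n - k ^ d"
    using card_periodic_points_circle_map(2)[OF assms(1)] assms by simp
  also have "\<dots> < k ^ n - k"
  proof -
    have "k ^ 1 < k ^ d"
      using assms(3,1) by (rule power_strict_increasing)
    moreover have "k ^ d < k ^ n"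
      using assms(4,1) by (rule power_strict_increasing)
    ultimately show ?thesis
      by simp
  qed
  finally show ?thesis .
qed

lemma dvd_card_prime_period_points_circle_map:
  assumes "1 < k" "0 < n"
  shows "n dvd card (prime_period_points (circle_map k) {0..<2 * pi} n)"
proof (rule dvd_card_prime_period_points)
  show "finite (prime_period_points (circle_map k) {0..<2 * pi} n)"
    using card_periodic_points_circle_map(1)[OF assms]
    by (rule rev_finite_subset) (auto simp: prime_period_points_def periodic_points_def)
  show "\<forall>\<theta>\<in>{0..<2 * pi}. circle_map k \<theta> \<in> {0..<2 * pi}"
    using circle_map_in_circle by blast
qed (rule assms(2))

lemma Pi_count_eq_card_prime_period_points:
  "Pi_count k n = card (prime_period_points (circle_map k) {0..<2 * pi} n)"
  by (simp add: Pi_count_def prime_period_points_def)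

lemma pseudoprime_cong_self:
  assumes "pseudoprime k n"
  shows "[k ^ n = k] (mod n)"
proof -
  have "n > 0" "[k ^ (n - 1) = 1] (mod n)"
    using assms by (auto simp: pseudoprime_def)
  then have "[k * k ^ (n - 1) = k * 1] (mod n)"
    by (intro cong_scalar_left)
  with \<open>n > 0\<close> show ?thesis
    by (simp flip: power_Suc)
qed

lemma composite_obtain_proper_divisor:
  fixes n :: nat
  assumes "1 < n" "\<not> prime n"
  obtains d where "d dvd n" "1 < d" "d < n"
proof -
  obtain d where "d dvd n" "d \<noteq> 1" "d \<noteq> n"
    using assms by (auto simp: prime_nat_iff)
  moreover from this have "d \<noteq> 0" "d \<le> n"
    using assms(1) by (auto intro: dvd_imp_le)
  ultimately show ?thesis
    using that by simp
qed

theorem theorem1: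
  fixes k n :: nat
  assumes "k > 1" and "pseudoprime k n"
  shows "\<exists>m::nat. m > 0 \<and> int k ^ n - int k - int (Pi_count k n) = int n * int m"
proof -
  have n: "1 < n" "\<not> prime n"
    using assms(2) by (auto simp: pseudoprime_def)
  obtain d where d: "d dvd n" "1 < d" "d < n"
    using composite_obtain_proper_divisor[OF n] .
  have less: "Pi_count k n < k ^ n - k"
    unfolding Pi_count_eq_card_prime_period_points
    using assms(1) d by (rule card_prime_period_points_circle_map_less)
  have "n dvd Pi_count k n"
    unfolding Pi_count_eq_card_prime_period_points
    using assms(1) n(1) by (intro dvd_card_prime_period_points_circle_map) auto
  moreover have "n dvd k ^ n - k"
    using pseudoprime_cong_self[OF assms(2)] less by (subst (asm) cong_altdef_nat) auto
  ultimately obtain m where m: "k ^ n - k - Pi_count k n = n * m"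
    by (metis dvd_diff_nat dvdE)
  then have "m > 0"
    using less by (intro gr0I) simp
  moreover have "int k ^ n - int k - int (Pi_count k n) = int n * int m"
    using m less by (simp flip: of_nat_mult of_nat_power add: of_nat_diff)
  ultimately show ?thesis
    by blast
qed

end
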